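(* (i) For every normalized one-parameter subgroup $\lambda$ of $\mathrm{SL}_2\times\mathrm{SL}_3$, the set $M^{-}(\lambda)$ is contained in $M^{-}(\lambda_i)$ for some $i\in\{1,\dots,7\}$, where $\lambda_1=(5,-5,3,-1,-2)$, $\lambda_2=(4,-4,2,1,-3)$, $\lambda_3=(4,-4,4,-1,-3)$, $\lambda_4=(3,-3,4,-1,-3)$, $\lambda_5=(1,-1,3,-1,-2)$, $\lambda_6=(1,-1,5,-1,-4)$, $\lambda_7=(2,-2,3,1,-4)$. (ii) A $(2,3)$-hypersurface $S=\{f=0\}\subset\mathbb{P}^1\times\mathbb{P}^2$ is unstable if $f$ is of one of the following forms, where $c,c_i$ denote cubic forms, $q,q_i$ quadratic forms, $l,l_i$ linear forms in the indicated variables and $\mu,\nu$ constants: (U1) $f=x_1^2c(y_0,y_1,y_2)+x_0x_1[c_0(y_1,y_2)+\mu y_0y_2^2]$; (U2) $f=x_1^2c_0(y_0,y_1,y_2)+x_0x_1(y_2^2l(y_0,y_1,y_2)+\mu y_2y_1^2)+\nu x_0^2y_2^3$; (U3) $f=x_1^2[c_0(y_1,y_2)+y_0q(y_1,y_2)+y_0^2l(y_1,y_2)]+x_0x_1[c_1(y_1,y_2)+\mu y_0y_2^2]+\nu x_0^2y_2^3$; (U4) $f=x_1^2[c_0(y_1,y_2)+y_0q(y_1,y_2)+\mu y_0^2y_2]+x_0x_1[c_1(y_1,y_2)+\nu y_0y_2^2]+x_0^2y_2^2l(y_1,y_2)$; (U5) $f=x_1^2[c_0(y_1,y_2)+y_0q_1(y_1,y_2)]+x_0x_1[c_1(y_1,y_2)+\mu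 y_0y_2^2]+x_0^2c_2(y_1,y_2)$; (U6) $f=x_1^2[c_0(y_1,y_2)+y_0y_2l(y_1,y_2)]+x_0x_1[c_1(y_1,y_2)+\mu y_0y_2^2]+x_0^2[c_2(y_1,y_2)+\nu y_0y_2^2]$; (U7) $f=x_1^2[c(y_1,y_2)+y_0y_2l_0(y_1,y_2)+\mu y_0^2y_2]+x_0x_1(y_2^2l_1(y_0,y_1,y_2)+\nu y_2y_1^2)+x_0^2y_2^2l_2(y_0,y_1,y_2)$.
   Context: Bihomogeneous coordinates $(x_0,x_1;y_0,y_1,y_2)$ on $\mathbb{P}^1\times\mathbb{P}^2$; stability refers to GIT for the natural action of $\mathrm{SL}_2\times\mathrm{SL}_3$ on $\mathbb{P}(H^0(\mathcal{O}(2,3)))$. A tuple $(a,-a,b,c,-b-c)$ denotes the one-parameter subgroup $t\mapsto\mathrm{diag}(t^a,t^{-a},t^b,t^c,t^{-b-c})$ acting on $(x_0,x_1,y_0,y_1,y_2)$; it is normalized if $a\geq0$ and $b\geq c\geq-b-c$. The weight of the monomial $x_0^ux_1^{2-u}y_0^vy_1^wy_2^{3-v-w}$ is $au-a(2-u)+bv+cw+(-b-c)(3-v-w)$. $M^{-}(\lambda)$ is the set of bidegree $(2,3)$ monomials of negative weight with respect to $\lambda$. *)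

theory Defs
  imports "HOL-Analysis.Analysis"
begin

text \<open>A bidegree (2,3) monomial x0^u x1^(2-u) y0^v y1^w y2^(3-v-w) is encoded by (u,v,w)
  with u <= 2 and v + w <= 3.  A one-parameter subgroup (a,-a,b,c,-b-c) is encoded by (a,b,c).\<close>

definition monomials23 :: "(nat \<times> nat \<times> nat) set" where
  "monomials23 = {(u,v,w). u \<le> 2 \<and> v + w \<le> 3}"

type_synonym ops = "int \<times> int \<times> int"

definition weight :: "ops \<Rightarrow> nat \<times> nat \<times> nat \<Rightarrow> int" where
  "weight l m = (case l of (a,b,c) \<Rightarrow> case m of (u,v,w) \<Rightarrow>
      a * int u - a * (2 - int u) + b * int v + c * int w + (- b - c) * (3 - int v - int w))"

definition normalized :: "ops \<Rightarrow> bool" where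
  "normalized l = (case l of (a,b,c) \<Rightarrow> a \<ge> 0 \<and> b \<ge> c \<and> c \<ge> - b - c)"

definition Mneg :: "ops \<Rightarrow> (nat \<times> nat \<times> nat) set" where
  "Mneg l = {m \<in> monomials23. weight l m < 0}"

definition lam :: "nat \<Rightarrow> ops" where
  "lam i = (if i = 1 then (5,3,-1) else if i = 2 then (4,2,1) else if i = 3 then (4,4,-1)
     else if i = 4 then (3,4,-1) else if i = 5 then (1,3,-1) else if i = 6 then (1,5,-1)
     else (2,3,1))"

definition bform :: "nat \<Rightarrow> (nat \<Rightarrow> complex) \<Rightarrow> complex \<Rightarrow> complex \<Rightarrow> complex" where
  "bform d \<beta> y1 y2 = (\<Sum>k\<le>d. \<beta> k * y1 ^ k * y2 ^ (d - k))"

definition tform :: "nat \<Rightarrow> (nat \<Rightarrow> nat \<Rightarrow> complex) \<Rightarrow> complex \<Rightarrow> complex \<Rightarrow> complex \<Rightarrow> complex" where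
  "tform d \<alpha> y0 y1 y2 = (\<Sum>v\<le>d. \<Sum>w\<le>d - v. \<alpha> v w * y0 ^ v * y1 ^ w * y2 ^ (d - v - w))"

type_synonym form23 = "complex \<Rightarrow> complex \<Rightarrow> complex \<Rightarrow> complex \<Rightarrow> complex \<Rightarrow> complex"

text \<open>GIT-unstable for SL2 x SL3: 0 lies in the closure of the orbit of f.  Since the space of
  (2,3)-forms is finite-dimensional, convergence of coefficients is equivalent to pointwise
  convergence of the polynomial functions.\<close>
definition unstable :: "form23 \<Rightarrow> bool" where
  "unstable f \<longleftrightarrow> (\<exists>(A :: nat \<Rightarrow> complex^2^2) (B :: nat \<Rightarrow> complex^3^3).
     (\<forall>n. det (A n) = 1 \<and> det (B n) = 1) \<and>
     (\<forall>(x :: complex^2) (y :: complex^3).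
        (\<lambda>n. f ((A n *v x)$1) ((A n *v x)$2) ((B n *v y)$1) ((B n *v y)$2) ((B n *v y)$3))
          \<longlonglongrightarrow> 0))"

definition U1 :: "form23 \<Rightarrow> bool" where
  "U1 f \<longleftrightarrow> (\<exists>c c0 \<mu>. \<forall>x0 x1 y0 y1 y2. f x0 x1 y0 y1 y2 =
     x1^2 * tform 3 c y0 y1 y2 + x0 * x1 * (bform 3 c0 y1 y2 + \<mu> * y0 * y2^2))"

definition U2 :: "form23 \<Rightarrow> bool" where
  "U2 f \<longleftrightarrow> (\<exists>c0 l \<mu> \<nu>. \<forall>x0 x1 y0 y1 y2. f x0 x1 y0 y1 y2 =
     x1^2 * tform 3 c0 y0 y1 y2 + x0 * x1 * (y2^2 * tform 1 l y0 y1 y2 + \<mu> * y2 * y1^2)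
     + \<nu> * x0^2 * y2^3)"

definition U3 :: "form23 \<Rightarrow> bool" where
  "U3 f \<longleftrightarrow> (\<exists>c0 q l c1 \<mu> \<nu>. \<forall>x0 x1 y0 y1 y2. f x0 x1 y0 y1 y2 =
     x1^2 * (bform 3 c0 y1 y2 + y0 * bform 2 q y1 y2 + y0^2 * bform 1 l y1 y2)
     + x0 * x1 * (bform 3 c1 y1 y2 + \<mu> * y0 * y2^2) + \<nu> * x0^2 * y2^3)"

definition U4 :: "form23 \<Rightarrow> bool" where
  "U4 f \<longleftrightarrow> (\<exists>c0 q c1 l \<mu> \<nu>. \<forall>x0 x1 y0 y1 y2. f x0 x1 y0 y1 y2 =
     x1^2 * (bform 3 c0 y1 y2 + y0 * bform 2 q y1 y2 + \<mu> * y0^2 * y2)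
     + x0 * x1 * (bform 3 c1 y1 y2 + \<nu> * y0 * y2^2) + x0^2 * y2^2 * bform 1 l y1 y2)"

definition U5 :: "form23 \<Rightarrow> bool" where
  "U5 f \<longleftrightarrow> (\<exists>c0 q1 c1 c2 \<mu>. \<forall>x0 x1 y0 y1 y2. f x0 x1 y0 y1 y2 =
     x1^2 * (bform 3 c0 y1 y2 + y0 * bform 2 q1 y1 y2)
     + x0 * x1 * (bform 3 c1 y1 y2 + \<mu> * y0 * y2^2) + x0^2 * bform 3 c2 y1 y2)"

definition U6 :: "form23 \<Rightarrow> bool" where
  "U6 f \<longleftrightarrow> (\<exists>c0 l c1 c2 \<mu> \<nu>. \<forall>x0 x1 y0 y1 y2. f x0 x1 y0 y1 y2 =
     x1^2 * (bform 3 c0 y1 y2 + y0 * y2 * bform 1 l y1 y2)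
     + x0 * x1 * (bform 3 c1 y1 y2 + \<mu> * y0 * y2^2)
     + x0^2 * (bform 3 c2 y1 y2 + \<nu> * y0 * y2^2))"

definition U7 :: "form23 \<Rightarrow> bool" where
  "U7 f \<longleftrightarrow> (\<exists>c l0 l1 l2 \<mu> \<nu>. \<forall>x0 x1 y0 y1 y2. f x0 x1 y0 y1 y2 =
     x1^2 * (bform 3 c y1 y2 + y0 * y2 * bform 1 l0 y1 y2 + \<mu> * y0^2 * y2)
     + x0 * x1 * (y2^2 * tform 1 l1 y0 y1 y2 + \<nu> * y2 * y1^2)
     + x0^2 * y2^2 * tform 1 l2 y0 y1 y2)"

end

theory Submission
  imports Defs
begin

(* (i) The weight of x0^u x1^(2-u) y0^v y1^w y2^(3-v-w) is 2a(u-1) + b(2v+w-3) + c(v+2w-3),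
   linear in the one-parameter subgroup (a,b,c), so M-(a,b,c) only changes across the hyperplanes
   where some weight vanishes.  Comparing 2a with the breakpoints b - c, b + 2c, 2b + c, 3b cuts
   the normalized cone into finitely many closed pieces, and on each piece every monomial of
   nonnegative lambda_i-weight (for the appropriate i) still has nonnegative weight.

   (ii) Each form (Uk) is spanned by monomials of M-(lambda_k); acting by lambda_k(t) with
   t = 1, 2, 3, ... multiplies every monomial by a negative power of t, so the orbit approaches 0
   (the easy direction of the Hilbert-Mumford criterion). *)

lemma atMost_nat_1_2_3:
  "{..1::nat} = {0,1}" "{..2::nat} = {0,1,2}" "{..3::nat} = {0,1,2,3}"
  by auto

lemma ball_monomials23:
  "(\<forall>m\<in>monomials23. P m) \<longleftrightarrow>
     (\<forall>u\<in>{0,1,2}. \<forall>v\<in>{0,1,2,3}. \<forall>w\<in>{0,1,2,3}. v + w \<le> 3 \<longrightarrow> P (u,v,w))"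
proof -
  have "(u,v,w) \<in> monomials23 \<longleftrightarrow>
      u \<in> {0,1,2} \<and> v \<in> {0,1,2,3} \<and> w \<in> {0,1,2,3} \<and> v + w \<le> 3" for u v w :: nat
    by (auto simp: monomials23_def)
  then show ?thesis by auto
qed

lemma Mneg_subset_iff:
  "Mneg l \<subseteq> Mneg l' \<longleftrightarrow> (\<forall>m\<in>monomials23. 0 \<le> weight l' m \<longrightarrow> 0 \<le> weight l m)"
  by (auto simp: Mneg_def)

lemma Mneg_subset_lam1:
  assumes "normalized (a,b,c)" "3*(b+c) \<le> 2*a" "b - c \<le> 2*a"
  shows "Mneg (a,b,c) \<subseteq> Mneg (lam 1)"
  using assms unfolding Mneg_subset_iff ball_monomials23
  by (auto simp: weight_def lam_def normalized_def)

lemma Mneg_subset_lam2: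
  assumes "normalized (a,b,c)" "0 \<le> c" "2*b + c \<le> 2*a"
  shows "Mneg (a,b,c) \<subseteq> Mneg (lam 2)"
  using assms unfolding Mneg_subset_iff ball_monomials23
  by (auto simp: weight_def lam_def normalized_def)

lemma Mneg_subset_lam3:
  assumes "normalized (a,b,c)" "2*b + c \<le> 2*a" "b - c \<le> 2*a" "2*a \<le> 3*b"
  shows "Mneg (a,b,c) \<subseteq> Mneg (lam 3)"
  using assms unfolding Mneg_subset_iff ball_monomials23
  by (auto simp: weight_def lam_def normalized_def)

lemma Mneg_subset_lam4:
  assumes "normalized (a,b,c)" "b + 2*c \<le> 2*a" "b - c \<le> 2*a" "2*a \<le> 2*b + c"
  shows "Mneg (a,b,c) \<subseteq> Mneg (lam 4)"
  using assms unfolding Mneg_subset_iff ball_monomials23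
  by (auto simp: weight_def lam_def normalized_def)

lemma Mneg_subset_lam5:
  assumes "normalized (a,b,c)" "b + 2*c \<le> 2*a" "2*a \<le> b - c"
  shows "Mneg (a,b,c) \<subseteq> Mneg (lam 5)"
  using assms unfolding Mneg_subset_iff ball_monomials23
  by (auto simp: weight_def lam_def normalized_def)

lemma Mneg_subset_lam6:
  assumes "normalized (a,b,c)" "2*a \<le> b + 2*c" "2*a \<le> b - c"
  shows "Mneg (a,b,c) \<subseteq> Mneg (lam 6)"
  using assms unfolding Mneg_subset_iff ball_monomials23
  by (auto simp: weight_def lam_def normalized_def)

lemma Mneg_subset_lam7:
  assumes "normalized (a,b,c)" "0 \<le> c" "b - c \<le> 2*a" "2*a \<le> b + 2*c"
  shows "Mneg (a,b,c) \<subseteq> Mneg (lam 7)"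
  using assms unfolding Mneg_subset_iff ball_monomials23
  by (auto simp: weight_def lam_def normalized_def)

lemma normalized_Mneg_subset_lam:
  assumes n: "normalized (a,b,c)"
  shows "\<exists>i\<in>{1..7}. Mneg (a,b,c) \<subseteq> Mneg (lam i)"
proof -
  from n have cone: "c \<le> b" "0 \<le> b + 2*c" by (simp_all add: normalized_def)
  consider "0 \<le> c" "2*a \<le> b - c" | "0 \<le> c" "b - c \<le> 2*a" "2*a \<le> b + 2*c"
    | "0 \<le> c" "b + 2*c \<le> 2*a" "2*a \<le> 2*b + c" | "0 \<le> c" "2*b + c \<le> 2*a"
    | "c < 0" "2*a \<le> b + 2*c" | "c < 0" "b + 2*c \<le> 2*a" "2*a \<le> b - c"
    | "c < 0" "b - c \<le> 2*a" "2*a \<le> 2*b + c" | "c < 0" "2*b + c \<le> 2*a" "2*a \<le> 3*b"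
    | "c < 0" "3*b \<le> 2*a"
    by linarith
  then show ?thesis
  proof cases
    case 1 with cone show ?thesis by (intro bexI[of _ 6] Mneg_subset_lam6 n) auto
  next
    case 2 with cone show ?thesis by (intro bexI[of _ 7] Mneg_subset_lam7 n) auto
  next
    case 3 with cone show ?thesis by (intro bexI[of _ 4] Mneg_subset_lam4 n) auto
  next
    case 4 with cone show ?thesis by (intro bexI[of _ 2] Mneg_subset_lam2 n) auto
  next
    case 5 with cone show ?thesis by (intro bexI[of _ 6] Mneg_subset_lam6 n) auto
  next
    case 6 with cone show ?thesis by (intro bexI[of _ 5] Mneg_subset_lam5 n) auto
  next
    case 7 with cone show ?thesis by (intro bexI[of _ 4] Mneg_subset_lam4 n) auto
  next
    case 8 with cone show ?thesis by (intro bexI[of _ 3] Mneg_subset_lam3 n) auto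
  next
    case 9 with cone show ?thesis by (intro bexI[of _ 1] Mneg_subset_lam1 n) auto
  qed
qed

definition ops_SL2 :: "ops \<Rightarrow> 'a::field \<Rightarrow> 'a^2^2" where
  "ops_SL2 l t = (case l of (a,b,c) \<Rightarrow>
     \<chi> i j. if i \<noteq> j then 0 else if i = 1 then t powi a else t powi (-a))"

definition ops_SL3 :: "ops \<Rightarrow> 'a::field \<Rightarrow> 'a^3^3" where
  "ops_SL3 l t = (case l of (a,b,c) \<Rightarrow>
     \<chi> i j. if i \<noteq> j then 0 else if i = 1 then t powi b else if i = 2 then t powi c
       else t powi (-b-c))"

lemma det_ops_SL2: "t \<noteq> 0 \<Longrightarrow> det (ops_SL2 l t) = 1"
  by (cases l) (simp add: ops_SL2_def det_2 power_int_minus)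

lemma det_ops_SL3:
  assumes "t \<noteq> 0"
  shows "det (ops_SL3 l t) = 1"
proof (cases l)
  case (fields a b c)
  have "t powi b * t powi c * t powi (-b-c) = t powi (b + c + (-b-c))"
    using assms by (simp only: power_int_add simp_thms)
  then show ?thesis by (simp add: fields ops_SL3_def det_3)
qed

lemma ops_SL2_mult_vec:
  "(ops_SL2 (a,b,c) t *v x)$1 = t powi a * x$1"
  "(ops_SL2 (a,b,c) t *v x)$2 = t powi (-a) * x$2"
  by (simp_all add: ops_SL2_def matrix_vector_mult_def sum_2)

lemma ops_SL3_mult_vec:
  "(ops_SL3 (a,b,c) t *v y)$1 = t powi b * y$1"
  "(ops_SL3 (a,b,c) t *v y)$2 = t powi c * y$2"
  "(ops_SL3 (a,b,c) t *v y)$3 = t powi (-b-c) * y$3"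
  by (simp_all add: ops_SL3_def matrix_vector_mult_def sum_3)

lemma tendsto_of_nat_Suc_power_int_neg:
  assumes "k < 0"
  shows "(\<lambda>n. (of_nat (Suc n) :: 'a::real_normed_field) powi k) \<longlonglongrightarrow> 0"
proof -
  have "(\<lambda>n. inverse (of_nat (Suc n) :: 'a)) \<longlonglongrightarrow> 0"
    using LIMSEQ_Suc[OF lim_inverse_n] by simp
  then have "(\<lambda>n. inverse (of_nat (Suc n) :: 'a) ^ nat (-k)) \<longlonglongrightarrow> 0 ^ nat (-k)"
    by (rule tendsto_power)
  moreover have "(0::'a) ^ nat (-k) = 0"
    using assms by simp
  ultimately show ?thesis
    by (simp add: power_int_def power_inverse)
qed

definition form_of :: "(nat \<times> nat \<times> nat \<Rightarrow> complex) \<Rightarrow> form23" where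
  "form_of F x0 x1 y0 y1 y2 =
     (\<Sum>u\<le>2. \<Sum>v\<le>3. \<Sum>w\<le>3-v. F (u,v,w) * (x0^u * x1^(2-u) * y0^v * y1^w * y2^(3-v-w)))"

lemma monomial_ops_scale:
  fixes t :: "'a::field"
  assumes "t \<noteq> 0" "u \<le> 2" "v + w \<le> 3"
  shows "(t powi a * x0)^u * (t powi (-a) * x1)^(2-u) * (t powi b * y0)^v * (t powi c * y1)^w
           * (t powi (-b-c) * y2)^(3-v-w)
         = t powi (weight (a,b,c) (u,v,w)) * (x0^u * x1^(2-u) * y0^v * y1^w * y2^(3-v-w))"
proof -
  have pow: "t powi (i * int n) = (t powi i) ^ n" for i n
    by (simp add: power_int_mult)
  have "weight (a,b,c) (u,v,w) = a * int u + (-a) * int (2-u) + b * int v + c * int w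
      + (-b-c) * int (3-v-w)"
    using assms by (simp add: weight_def of_nat_diff algebra_simps)
  then have "t powi (weight (a,b,c) (u,v,w)) = (t powi a)^u * (t powi (-a))^(2-u) * (t powi b)^v
      * (t powi c)^w * (t powi (-b-c))^(3-v-w)"
    using assms(1) by (simp only: power_int_add pow simp_thms)
  then show ?thesis by (simp add: power_mult_distrib mult_ac)
qed

lemma form_of_ops_scale:
  fixes t :: complex
  assumes "t \<noteq> 0"
  shows "form_of F ((ops_SL2 l t *v x)$1) ((ops_SL2 l t *v x)$2)
           ((ops_SL3 l t *v y)$1) ((ops_SL3 l t *v y)$2) ((ops_SL3 l t *v y)$3)
         = (\<Sum>u\<le>2. \<Sum>v\<le>3. \<Sum>w\<le>3-v. F (u,v,w) * (t powi weight l (u,v,w)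
              * ((x$1)^u * (x$2)^(2-u) * (y$1)^v * (y$2)^w * (y$3)^(3-v-w))))"
proof -
  obtain a b c where l: "l = (a,b,c)" by (cases l)
  show ?thesis
    unfolding form_of_def l ops_SL2_mult_vec ops_SL3_mult_vec
  proof (intro sum.cong refl)
    fix u v w :: nat assume "u \<in> {..2}" "v \<in> {..3}" "w \<in> {..3 - v}"
    then have "u \<le> 2" "v + w \<le> 3" by auto
    then show "F (u,v,w) * ((t powi a * x$1)^u * (t powi (-a) * x$2)^(2-u) * (t powi b * y$1)^v
        * (t powi c * y$2)^w * (t powi (-b-c) * y$3)^(3-v-w))
      = F (u,v,w) * (t powi weight (a,b,c) (u,v,w)
        * ((x$1)^u * (x$2)^(2-u) * (y$1)^v * (y$2)^w * (y$3)^(3-v-w)))"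
      by (simp only: monomial_ops_scale[OF assms])
  qed
qed

lemma unstable_if_monomials_Mneg:
  assumes f: "\<And>x0 x1 y0 y1 y2. f x0 x1 y0 y1 y2 = form_of F x0 x1 y0 y1 y2"
    and neg: "\<forall>m\<in>monomials23. F m \<noteq> 0 \<longrightarrow> m \<in> Mneg l"
  shows "unstable f"
proof -
  define T where "T n = (of_nat (Suc n) :: complex)" for n
  have T: "T n \<noteq> 0" for n
    by (simp add: T_def del: of_nat_Suc)
  have lim: "(\<lambda>n. f ((ops_SL2 l (T n) *v x)$1) ((ops_SL2 l (T n) *v x)$2)
      ((ops_SL3 l (T n) *v y)$1) ((ops_SL3 l (T n) *v y)$2) ((ops_SL3 l (T n) *v y)$3))
      \<longlonglongrightarrow> 0" for x y
    unfolding f form_of_ops_scale[OF T]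
  proof (intro tendsto_null_sum)
    fix u v w :: nat assume "u \<in> {..2}" "v \<in> {..3}" "w \<in> {..3 - v}"
    then have "(u,v,w) \<in> monomials23" by (simp add: monomials23_def)
    show "(\<lambda>n. F (u,v,w) * (T n powi weight l (u,v,w)
        * ((x$1)^u * (x$2)^(2-u) * (y$1)^v * (y$2)^w * (y$3)^(3-v-w)))) \<longlonglongrightarrow> 0"
    proof (cases "F (u,v,w) = 0")
      case False
      with neg \<open>(u,v,w) \<in> monomials23\<close> have "weight l (u,v,w) < 0"
        by (simp add: Mneg_def)
      then have "(\<lambda>n. T n powi weight l (u,v,w)) \<longlonglongrightarrow> 0"
        unfolding T_def by (rule tendsto_of_nat_Suc_power_int_neg)
      then show ?thesis by (intro tendsto_mult_left_zero tendsto_mult_right_zero)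
    qed simp
  qed
  show ?thesis
    unfolding unstable_def
    by (intro exI[of _ "\<lambda>n. ops_SL2 l (T n)"] exI[of _ "\<lambda>n. ops_SL3 l (T n)"] conjI allI
        det_ops_SL2 det_ops_SL3 T lim)
qed

lemma U1_unstable:
  assumes "U1 f"
  shows "unstable f"
proof -
  from assms obtain c c0 \<mu> where f: "f x0 x1 y0 y1 y2 =
       x1^2 * tform 3 c y0 y1 y2 + x0 * x1 * (bform 3 c0 y1 y2 + \<mu> * y0 * y2^2)" for x0 x1 y0 y1 y2
    unfolding U1_def by blast
  define F :: "nat \<times> nat \<times> nat \<Rightarrow> complex" where
    "F = (\<lambda>(u,v,w).
       if u = 0 then c v w else if u = 1 \<and> v = 0 then c0 w
       else if (u,v,w) = (1,1,0) then \<mu> else 0)"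
  show ?thesis
  proof (rule unstable_if_monomials_Mneg)
    show "f x0 x1 y0 y1 y2 = form_of F x0 x1 y0 y1 y2" for x0 x1 y0 y1 y2
      by (simp add: f form_of_def F_def tform_def bform_def atMost_nat_1_2_3
          algebra_simps power2_eq_square power3_eq_cube)
    show "\<forall>m\<in>monomials23. F m \<noteq> 0 \<longrightarrow> m \<in> Mneg (lam 1)"
      by (simp add: ball_monomials23 F_def Mneg_def monomials23_def weight_def lam_def)
  qed
qed

lemma U2_unstable:
  assumes "U2 f"
  shows "unstable f"
proof -
  from assms obtain c0 l \<mu> \<nu> where f: "f x0 x1 y0 y1 y2 =
       x1^2 * tform 3 c0 y0 y1 y2 + x0 * x1 * (y2^2 * tform 1 l y0 y1 y2 + \<mu> * y2 * y1^2)
       + \<nu> * x0^2 * y2^3" for x0 x1 y0 y1 y2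
    unfolding U2_def by blast
  define F :: "nat \<times> nat \<times> nat \<Rightarrow> complex" where
    "F = (\<lambda>(u,v,w).
       if u = 0 then c0 v w else if u = 1 \<and> v + w \<le> 1 then l v w
       else if (u,v,w) = (1,0,2) then \<mu> else if (u,v,w) = (2,0,0) then \<nu> else 0)"
  show ?thesis
  proof (rule unstable_if_monomials_Mneg)
    show "f x0 x1 y0 y1 y2 = form_of F x0 x1 y0 y1 y2" for x0 x1 y0 y1 y2
      by (simp add: f form_of_def F_def tform_def bform_def atMost_nat_1_2_3
          algebra_simps power2_eq_square power3_eq_cube)
    show "\<forall>m\<in>monomials23. F m \<noteq> 0 \<longrightarrow> m \<in> Mneg (lam 2)"
      by (simp add: ball_monomials23 F_def Mneg_def monomials23_def weight_def lam_def)
  qed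
qed

lemma U3_unstable:
  assumes "U3 f"
  shows "unstable f"
proof -
  from assms obtain c0 q l c1 \<mu> \<nu> where f: "f x0 x1 y0 y1 y2 =
       x1^2 * (bform 3 c0 y1 y2 + y0 * bform 2 q y1 y2 + y0^2 * bform 1 l y1 y2)
       + x0 * x1 * (bform 3 c1 y1 y2 + \<mu> * y0 * y2^2) + \<nu> * x0^2 * y2^3" for x0 x1 y0 y1 y2
    unfolding U3_def by blast
  define F :: "nat \<times> nat \<times> nat \<Rightarrow> complex" where
    "F = (\<lambda>(u,v,w).
       if u = 0 \<and> v = 0 then c0 w else if u = 0 \<and> v = 1 then q w
       else if u = 0 \<and> v = 2 then l w else if u = 1 \<and> v = 0 then c1 w
       else if (u,v,w) = (1,1,0) then \<mu> else if (u,v,w) = (2,0,0) then \<nu> else 0)"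
  show ?thesis
  proof (rule unstable_if_monomials_Mneg)
    show "f x0 x1 y0 y1 y2 = form_of F x0 x1 y0 y1 y2" for x0 x1 y0 y1 y2
      by (simp add: f form_of_def F_def tform_def bform_def atMost_nat_1_2_3
          algebra_simps power2_eq_square power3_eq_cube)
    show "\<forall>m\<in>monomials23. F m \<noteq> 0 \<longrightarrow> m \<in> Mneg (lam 3)"
      by (simp add: ball_monomials23 F_def Mneg_def monomials23_def weight_def lam_def)
  qed
qed

lemma U4_unstable:
  assumes "U4 f"
  shows "unstable f"
proof -
  from assms obtain c0 q c1 l \<mu> \<nu> where f: "f x0 x1 y0 y1 y2 =
       x1^2 * (bform 3 c0 y1 y2 + y0 * bform 2 q y1 y2 + \<mu> * y0^2 * y2)
       + x0 * x1 * (bform 3 c1 y1 y2 + \<nu> * y0 * y2^2) + x0^2 * y2^2 * bform 1 l y1 y2" for x0 x1 y0 y1 y2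
    unfolding U4_def by blast
  define F :: "nat \<times> nat \<times> nat \<Rightarrow> complex" where
    "F = (\<lambda>(u,v,w).
       if u = 0 \<and> v = 0 then c0 w else if u = 0 \<and> v = 1 then q w
       else if (u,v,w) = (0,2,0) then \<mu> else if u = 1 \<and> v = 0 then c1 w
       else if (u,v,w) = (1,1,0) then \<nu> else if u = 2 \<and> v = 0 \<and> w \<le> 1 then l w else 0)"
  show ?thesis
  proof (rule unstable_if_monomials_Mneg)
    show "f x0 x1 y0 y1 y2 = form_of F x0 x1 y0 y1 y2" for x0 x1 y0 y1 y2
      by (simp add: f form_of_def F_def tform_def bform_def atMost_nat_1_2_3
          algebra_simps power2_eq_square power3_eq_cube)
    show "\<forall>m\<in>monomials23. F m \<noteq> 0 \<longrightarrow> m \<in> Mneg (lam 4)"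
      by (simp add: ball_monomials23 F_def Mneg_def monomials23_def weight_def lam_def)
  qed
qed

lemma U5_unstable:
  assumes "U5 f"
  shows "unstable f"
proof -
  from assms obtain c0 q1 c1 c2 \<mu> where f: "f x0 x1 y0 y1 y2 =
       x1^2 * (bform 3 c0 y1 y2 + y0 * bform 2 q1 y1 y2)
       + x0 * x1 * (bform 3 c1 y1 y2 + \<mu> * y0 * y2^2) + x0^2 * bform 3 c2 y1 y2" for x0 x1 y0 y1 y2
    unfolding U5_def by blast
  define F :: "nat \<times> nat \<times> nat \<Rightarrow> complex" where
    "F = (\<lambda>(u,v,w).
       if v = 0 then (if u = 0 then c0 w else if u = 1 then c1 w else c2 w)
       else if u = 0 \<and> v = 1 then q1 w else if (u,v,w) = (1,1,0) then \<mu> else 0)"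
  show ?thesis
  proof (rule unstable_if_monomials_Mneg)
    show "f x0 x1 y0 y1 y2 = form_of F x0 x1 y0 y1 y2" for x0 x1 y0 y1 y2
      by (simp add: f form_of_def F_def tform_def bform_def atMost_nat_1_2_3
          algebra_simps power2_eq_square power3_eq_cube)
    show "\<forall>m\<in>monomials23. F m \<noteq> 0 \<longrightarrow> m \<in> Mneg (lam 5)"
      by (simp add: ball_monomials23 F_def Mneg_def monomials23_def weight_def lam_def)
  qed
qed

lemma U6_unstable:
  assumes "U6 f"
  shows "unstable f"
proof -
  from assms obtain c0 l c1 c2 \<mu> \<nu> where f: "f x0 x1 y0 y1 y2 =
       x1^2 * (bform 3 c0 y1 y2 + y0 * y2 * bform 1 l y1 y2)
       + x0 * x1 * (bform 3 c1 y1 y2 + \<mu> * y0 * y2^2)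
       + x0^2 * (bform 3 c2 y1 y2 + \<nu> * y0 * y2^2)" for x0 x1 y0 y1 y2
    unfolding U6_def by blast
  define F :: "nat \<times> nat \<times> nat \<Rightarrow> complex" where
    "F = (\<lambda>(u,v,w).
       if v = 0 then (if u = 0 then c0 w else if u = 1 then c1 w else c2 w)
       else if u = 0 \<and> v = 1 \<and> w \<le> 1 then l w else if (u,v,w) = (1,1,0) then \<mu>
       else if (u,v,w) = (2,1,0) then \<nu> else 0)"
  show ?thesis
  proof (rule unstable_if_monomials_Mneg)
    show "f x0 x1 y0 y1 y2 = form_of F x0 x1 y0 y1 y2" for x0 x1 y0 y1 y2
      by (simp add: f form_of_def F_def tform_def bform_def atMost_nat_1_2_3
          algebra_simps power2_eq_square power3_eq_cube)
    show "\<forall>m\<in>monomials23. F m \<noteq> 0 \<longrightarrow> m \<in> Mneg (lam 6)"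
      by (simp add: ball_monomials23 F_def Mneg_def monomials23_def weight_def lam_def)
  qed
qed

lemma U7_unstable:
  assumes "U7 f"
  shows "unstable f"
proof -
  from assms obtain c l0 l1 l2 \<mu> \<nu> where f: "f x0 x1 y0 y1 y2 =
       x1^2 * (bform 3 c y1 y2 + y0 * y2 * bform 1 l0 y1 y2 + \<mu> * y0^2 * y2)
       + x0 * x1 * (y2^2 * tform 1 l1 y0 y1 y2 + \<nu> * y2 * y1^2)
       + x0^2 * y2^2 * tform 1 l2 y0 y1 y2" for x0 x1 y0 y1 y2
    unfolding U7_def by blast
  define F :: "nat \<times> nat \<times> nat \<Rightarrow> complex" where
    "F = (\<lambda>(u,v,w).
       if u = 0 \<and> v = 0 then c w else if u = 0 \<and> v = 1 \<and> w \<le> 1 then l0 w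
       else if (u,v,w) = (0,2,0) then \<mu> else if u = 1 \<and> v + w \<le> 1 then l1 v w
       else if (u,v,w) = (1,0,2) then \<nu> else if u = 2 \<and> v + w \<le> 1 then l2 v w else 0)"
  show ?thesis
  proof (rule unstable_if_monomials_Mneg)
    show "f x0 x1 y0 y1 y2 = form_of F x0 x1 y0 y1 y2" for x0 x1 y0 y1 y2
      by (simp add: f form_of_def F_def tform_def bform_def atMost_nat_1_2_3
          algebra_simps power2_eq_square power3_eq_cube)
    show "\<forall>m\<in>monomials23. F m \<noteq> 0 \<longrightarrow> m \<in> Mneg (lam 7)"
      by (simp add: ball_monomials23 F_def Mneg_def monomials23_def weight_def lam_def)
  qed
qed

theorem lemma3p2:
  shows "(\<forall>l. normalized l \<longrightarrow> (\<exists>i\<in>{1..7::nat}. Mneg l \<subseteq> Mneg (lam i)))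
    \<and> (\<forall>f. U1 f \<or> U2 f \<or> U3 f \<or> U4 f \<or> U5 f \<or> U6 f \<or> U7 f \<longrightarrow> unstable f)"
  using normalized_Mneg_subset_lam U1_unstable U2_unstable U3_unstable U4_unstable U5_unstable
    U6_unstable U7_unstable
  by (auto simp: split_paired_all)

end
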